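(* Let $R\ge1$, $\Gamma\ge1$, $1\le s\le n_2$, $\gamma>0$, $c\ge1$. Let $\hat X=\sum_{r=1}^R\hat u^r(\hat v^r)^T$ have rank $R$, with $\|\hat v^r\|_1\le\sqrt s\|\hat v^r\|_2$ for all $r$ and $\sum_r\|\hat u^r\|_2^2\|\hat v^r\|_2^2\le\Gamma^2$, and let $c_{\hat U}>0$ satisfy $\sum_{r=1}^R(\|\hat u^r\|_2\|\hat v^r\|_2)^{2/3}\le c_{\hat U}R^{2/3}\|\hat X\|_{2/3}^{2/3}$. Let $\eta\in\mathbb{R}^m\setminus\{0\}$, $y=\mathcal{A}(\hat X)+\eta$, and set $\alpha=\beta=\|\eta\|_2^2/\|\hat X\|_{2/3}^{2/3}$, assumed $<1$. Assume $\mathcal{A}$ has the additive rank-$2R$ effectively $\big(n_1,\max\{s,\gamma^2(\|\hat X\|_{2/3}^{2/3}/\|\eta\|_2^2)^2\}\big)$-sparse RIP$_{(c+1)\Gamma}$ with constant $0<\delta<1$. Then for any global minimizer $(u^1_{\alpha,\beta},\dots,v^R_{\alpha,\beta})$ of $J^R_{\alpha,\beta}$ with $\|\sigma_{\alpha,\beta}\|_2\le c\Gamma$ (where $(\sigma_{\alpha,\beta})_r=\|u^r_{\alpha,\beta}\|_2\|v^r_{\alpha,\beta}\|_2$) and $\|v^r_{\alpha,\beta}\|_2\ge(\|\hat X\|_F+\|\eta\|_2+\sqrt\delta)^2/\gamma$ for all $r\in[R]$, $$\|\hat X-X_{\alpha,\beta}\|_F\le\left(2\sqrt{c_{\hat U}R^{2/3}s^{1/3}}+2\right)\|\eta\|_2+\sqrt\delta,$$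 where $X_{\alpha,\beta}=\sum_{r=1}^Ru^r_{\alpha,\beta}(v^r_{\alpha,\beta})^T$.
   Context: $J^R_{\alpha,\beta}(u^1,\dots,u^R,v^1,\dots,v^R)=\|y-\mathcal{A}(\sum_{r=1}^Ru^r(v^r)^T)\|_2^2+\alpha\sum_r\|u^r\|_2^2+\beta\sum_r\|v^r\|_1$, with $\mathcal{A}:\mathbb{R}^{n_1\times n_2}\to\mathbb{R}^m$ linear. $\|Z\|_p$ is the Schatten-$p$ (quasi-)norm (the $\ell_p$ quasi-norm of the singular values). For $n\ge1,s>0$: $K_{n,s}=\{z\in\mathbb{R}^n:\|z\|_2\le1,\|z\|_1\le\sqrt s\}$. $K^{R,\Gamma}_{s_1,s_2}$ is the set of $Z=\sum_{r=1}^R\sigma_ru^r(v^r)^T$ with $u^r\in K_{n_1,s_1}$, $v^r\in K_{n_2,s_2}$, $\|u^r\|_2=\|v^r\|_2=1$, $\|\sigma\|_2\le\Gamma$. $\mathcal{A}$ has the additive rank-$R$ effectively $(s_1,s_2)$-sparse RIP$_\Gamma$ with constant $\delta$ if $|\|\mathcal{A}(Z)\|_2^2-\|Z\|_F^2|\le\delta$ for all $Z\in K^{R,\Gamma}_{s_1,s_2}$. *)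

theory Defs
  imports Jordan_Normal_Form.DL_Rank Jordan_Normal_Form.Char_Poly
    "HOL-Computational_Algebra.Polynomial"
begin

definition norm2 :: "real vec \<Rightarrow> real" where
  "norm2 x = sqrt (\<Sum>i<dim_vec x. (x $ i)^2)"

definition norm1 :: "real vec \<Rightarrow> real" where
  "norm1 x = (\<Sum>i<dim_vec x. \<bar>x $ i\<bar>)"

definition frob :: "real mat \<Rightarrow> real" where
  "frob Z = sqrt (\<Sum>i<dim_row Z. \<Sum>j<dim_col Z. (Z $$ (i,j))^2)"

definition sing_vals :: "real mat \<Rightarrow> real multiset" where
  "sing_vals Z = image_mset sqrt (proots (char_poly (transpose_mat Z * Z)))"

definition schatten :: "real \<Rightarrow> real mat \<Rightarrow> real" where
  "schatten p Z = (\<Sum>\<sigma>\<in>#sing_vals Z. \<sigma> powr p) powr (1/p)"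

definition mrank :: "real mat \<Rightarrow> nat" where
  "mrank Z = vec_space.rank (dim_row Z) (Z :: real mat)"

definition factor_mat :: "nat \<Rightarrow> nat \<Rightarrow> nat \<Rightarrow> (nat \<Rightarrow> real vec) \<Rightarrow> (nat \<Rightarrow> real vec) \<Rightarrow> real mat" where
  "factor_mat n1 n2 R u v = mat n1 n2 (\<lambda>(i,j). \<Sum>r<R. (u r $ i) * (v r $ j))"

definition lin_meas :: "nat \<Rightarrow> nat \<Rightarrow> nat \<Rightarrow> (real mat \<Rightarrow> real vec) \<Rightarrow> bool" where
  "lin_meas n1 n2 m A \<longleftrightarrow>
     (\<forall>Z \<in> carrier_mat n1 n2. A Z \<in> carrier_vec m) \<and>
     (\<forall>Z \<in> carrier_mat n1 n2. \<forall>W \<in> carrier_mat n1 n2. A (Z + W) = A Z + A W) \<and>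
     (\<forall>Z \<in> carrier_mat n1 n2. \<forall>a. A (a \<cdot>\<^sub>m Z) = a \<cdot>\<^sub>v A Z)"

definition J_fun :: "nat \<Rightarrow> nat \<Rightarrow> (real mat \<Rightarrow> real vec) \<Rightarrow> real vec \<Rightarrow> nat \<Rightarrow> real \<Rightarrow> real
    \<Rightarrow> (nat \<Rightarrow> real vec) \<Rightarrow> (nat \<Rightarrow> real vec) \<Rightarrow> real" where
  "J_fun n1 n2 A y R \<alpha> \<beta> u v =
     (norm2 (y - A (factor_mat n1 n2 R u v)))^2
     + \<alpha> * (\<Sum>r<R. (norm2 (u r))^2) + \<beta> * (\<Sum>r<R. norm1 (v r))"

definition K_set :: "nat \<Rightarrow> real \<Rightarrow> real vec set" where
  "K_set n s = {z \<in> carrier_vec n. norm2 z \<le> 1 \<and> norm1 z \<le> sqrt s}"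

definition K_RG :: "nat \<Rightarrow> nat \<Rightarrow> nat \<Rightarrow> real \<Rightarrow> real \<Rightarrow> real \<Rightarrow> real mat set" where
  "K_RG n1 n2 R \<Gamma> s1 s2 =
     {mat n1 n2 (\<lambda>(i,j). \<Sum>r<R. \<sigma> r * (u r $ i) * (v r $ j)) | \<sigma> u v.
        (\<forall>r<R. u r \<in> K_set n1 s1 \<and> v r \<in> K_set n2 s2 \<and> norm2 (u r) = 1 \<and> norm2 (v r) = 1)
        \<and> sqrt (\<Sum>r<R. (\<sigma> r)^2) \<le> \<Gamma>}"

definition sparse_RIP :: "nat \<Rightarrow> nat \<Rightarrow> (real mat \<Rightarrow> real vec) \<Rightarrow> nat \<Rightarrow> real \<Rightarrow> real \<Rightarrow> real \<Rightarrow> real \<Rightarrow> bool" where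
  "sparse_RIP n1 n2 A R s1 s2 \<Gamma> \<delta> \<longleftrightarrow>
     (\<forall>Z \<in> K_RG n1 n2 R \<Gamma> s1 s2. \<bar>(norm2 (A Z))^2 - (frob Z)^2\<bar> \<le> \<delta>)"

end

theory Submission imports Defs "HOL-Analysis.L2_Norm" begin

text \<open>Comparing the minimizer with the zero factorization bounds $J^R_{\alpha,\beta}$ by
  $\|y\|_2^2 \le (\|\hat X\|_F + \|\eta\|_2 + \sqrt\delta)^2$; since every $\|v^r\|_2$ is large, the
  $\ell_1$-penalty then forces each $v^r$ to be effectively sparse at the level of the RIP, so the
  RIP applies to $\hat X - X$. Comparing instead with the factorization of $\hat X$ whose rank-one
  terms are rescaled to balance the two penalties bounds the residual $\|y - \mathcal A(X)\|_2^2$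
  by $(1 + 2 c_{\hat U} R^{2/3} s^{1/3}) \|\eta\|_2^2$, because the balanced penalty of a term is
  governed by the $2/3$-power of its weight and $\alpha \|\hat X\|_{2/3}^{2/3} = \|\eta\|_2^2$.
  The RIP transfers this residual bound to $\|\hat X - X\|_F$.\<close>

lemma sum_lessThan_add:
  fixes R R' :: nat
  shows "(\<Sum>r<R + R'. f r) = (\<Sum>r<R. f r) + (\<Sum>r<R'. f (r + R) :: 'a :: comm_monoid_add)"
proof -
  have "(\<Sum>r<R + R'. f r) = (\<Sum>r<R. f r) + (\<Sum>r\<in>{R..<R + R'}. f r)"
    using sum.atLeastLessThan_concat[of 0 R "R + R'" f] by (simp add: lessThan_atLeast0)
  also have "(\<Sum>r\<in>{R..<R + R'}. f r) = (\<Sum>r<R'. f (r + R))"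
    using sum.shift_bounds_nat_ivl[of f 0 R R'] by (simp add: lessThan_atLeast0 add.commute)
  finally show ?thesis .
qed

lemma le_add_sqrt_if_abs_sq_diff_le:
  fixes a b \<delta> :: real
  assumes "\<bar>a\<^sup>2 - b\<^sup>2\<bar> \<le> \<delta>" "0 \<le> b"
  shows "a \<le> b + sqrt \<delta>"
proof -
  have "0 \<le> \<delta>" using assms(1) by linarith
  moreover have "0 \<le> 2 * b * sqrt \<delta>" using assms(2) \<open>0 \<le> \<delta>\<close> by simp
  ultimately have "a\<^sup>2 \<le> (b + sqrt \<delta>)\<^sup>2"
    using assms(1) by (simp add: power2_sum abs_le_iff)
  then show ?thesis using \<open>0 \<le> \<delta>\<close> assms(2) by (auto intro: power2_le_imp_le)
qed

lemma sqrt_one_plus_twice_le: "0 \<le> K \<Longrightarrow> sqrt (1 + 2 * K) \<le> 1 + 2 * sqrt K"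
  by (rule real_le_lsqrt) (auto simp: power2_sum power_mult_distrib)

lemma cube_root_balance:
  fixes a b c s :: real
  assumes "0 < a" "0 < b" "0 < s" "b \<le> sqrt s * c"
  defines "t \<equiv> (a * b) powr (1/3) / a"
  shows "0 < t" "t\<^sup>2 * a\<^sup>2 + b / t \<le> 2 * s powr (1/3) * (a * c) powr (2/3)"
proof -
  define g where "g = (a * b) powr (1/3)"
  have g: "0 < g" "g\<^sup>2 = (a * b) powr (2/3)" "g ^ 3 = a * b"
    using assms(1,2) unfolding g_def by (simp_all add: powr_realpow[symmetric] powr_powr)
  show "0 < t" using g assms(1) unfolding t_def g_def[symmetric] by simp
  have "t\<^sup>2 * a\<^sup>2 + b / t = 2 * g\<^sup>2"
    using g assms(1) unfolding t_def g_def[symmetric]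
    by (simp add: power_divide field_simps power2_eq_square power3_eq_cube)
  also have "\<dots> \<le> 2 * (a * (sqrt s * c)) powr (2/3)"
    unfolding g(2) using assms(1,2,4) by (intro mult_left_mono powr_mono2) auto
  also have "\<dots> = 2 * s powr (1/3) * (a * c) powr (2/3)"
    using assms(1-4) by (simp add: powr_mult powr_half_sqrt[symmetric] powr_powr mult.left_commute)
  finally show "t\<^sup>2 * a\<^sup>2 + b / t \<le> 2 * s powr (1/3) * (a * c) powr (2/3)" .
qed

section \<open>Vector norms\<close>

lemma norm2_eq_L2_set: "norm2 x = L2_set (\<lambda>i. x $ i) {..<dim_vec x}"
  unfolding norm2_def L2_set_def by simp

lemma norm2_nonneg [simp]: "0 \<le> norm2 x"
  unfolding norm2_def by (simp add: sum_nonneg)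

lemma norm1_nonneg [simp]: "0 \<le> norm1 x"
  unfolding norm1_def by (simp add: sum_nonneg)

lemma norm2_zero_vec [simp]: "norm2 (0\<^sub>v n) = 0"
  unfolding norm2_def by simp

lemma norm1_zero_vec [simp]: "norm1 (0\<^sub>v n) = 0"
  unfolding norm1_def by simp

lemma norm2_smult [simp]: "norm2 (k \<cdot>\<^sub>v x) = \<bar>k\<bar> * norm2 x"
proof -
  have "norm2 (k \<cdot>\<^sub>v x) = sqrt (k^2 * (\<Sum>i<dim_vec x. (x $ i)^2))"
    unfolding norm2_def by (simp add: power_mult_distrib sum_distrib_left)
  then show ?thesis unfolding norm2_def by (simp add: real_sqrt_mult)
qed

lemma norm1_smult [simp]: "norm1 (k \<cdot>\<^sub>v x) = \<bar>k\<bar> * norm1 x"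
  unfolding norm1_def by (simp add: abs_mult sum_distrib_left)

lemma norm2_uminus [simp]: "norm2 (- x) = norm2 x"
  unfolding norm2_def by simp

lemma norm2_le_norm1: "norm2 x \<le> norm1 x"
  unfolding norm2_eq_L2_set norm1_def by (rule L2_set_le_sum_abs)

lemma norm1_le_sqrt_dim_norm2: "norm1 x \<le> sqrt (real (dim_vec x)) * norm2 x"
proof -
  have "norm1 x = (\<Sum>i<dim_vec x. \<bar>x $ i\<bar> * \<bar>1::real\<bar>)" unfolding norm1_def by simp
  also have "\<dots> \<le> L2_set (\<lambda>i. x $ i) {..<dim_vec x} * L2_set (\<lambda>i. 1::real) {..<dim_vec x}"
    by (rule L2_set_mult_ineq)
  also have "\<dots> = sqrt (real (dim_vec x)) * norm2 x"
    unfolding norm2_eq_L2_set L2_set_constant by simp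
  finally show ?thesis .
qed

lemma norm2_add_le:
  assumes "x \<in> carrier_vec n" "y \<in> carrier_vec n"
  shows "norm2 (x + y) \<le> norm2 x + norm2 y"
proof -
  have "L2_set (\<lambda>i. (x + y) $ i) {..<n} = L2_set (\<lambda>i. x $ i + y $ i) {..<n}"
    using assms by (intro L2_set_cong) auto
  then show ?thesis
    using assms L2_set_triangle_ineq[of "\<lambda>i. x $ i" "\<lambda>i. y $ i" "{..<n}"]
    unfolding norm2_eq_L2_set by simp
qed

lemma norm2_diff_le:
  assumes "x \<in> carrier_vec n" "y \<in> carrier_vec n"
  shows "norm2 (x - y) \<le> norm2 x + norm2 y"
  using norm2_add_le[of x n "- y"] assms by (simp add: minus_add_uminus_vec)

lemma norm2_eq_0_imp_index_eq_0: "norm2 x = 0 \<Longrightarrow> i < dim_vec x \<Longrightarrow> x $ i = 0"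
  unfolding norm2_eq_L2_set using L2_set_eq_0_iff[of "{..<dim_vec x}"] by auto

lemma norm2_pos_if_nonzero:
  assumes "x \<in> carrier_vec n" "x \<noteq> 0\<^sub>v n"
  shows "0 < norm2 x"
proof -
  have "norm2 x \<noteq> 0"
    using assms norm2_eq_0_imp_index_eq_0[of x] by (auto intro: eq_vecI)
  then show ?thesis using norm2_nonneg[of x] by linarith
qed

lemma outer_entry_eq_0:
  "norm2 p = 0 \<or> norm2 q = 0 \<Longrightarrow> i < dim_vec p \<Longrightarrow> j < dim_vec q \<Longrightarrow> p $ i * q $ j = 0"
  using norm2_eq_0_imp_index_eq_0 by auto

lemma unit_vec_in_K_set:
  assumes "0 < n" "1 \<le> s"
  shows "unit_vec n 0 \<in> K_set n s" "norm2 (unit_vec n 0) = 1"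
proof -
  have "norm2 (unit_vec n 0) = 1" "norm1 (unit_vec n 0) = 1"
    using assms(1) unfolding norm2_def norm1_def by (simp_all add: sum.remove[of _ 0])
  then show "unit_vec n 0 \<in> K_set n s" "norm2 (unit_vec n 0) = 1"
    using assms unfolding K_set_def by auto
qed

section \<open>Factorized matrices and the sparse RIP\<close>

lemma factor_mat_carrier [simp]: "factor_mat n1 n2 R p q \<in> carrier_mat n1 n2"
  unfolding factor_mat_def by simp

lemma factor_mat_cong:
  assumes "\<And>r i j. r < R \<Longrightarrow> i < n1 \<Longrightarrow> j < n2 \<Longrightarrow> p r $ i * q r $ j = p' r $ i * q' r $ j"
  shows "factor_mat n1 n2 R p q = factor_mat n1 n2 R p' q'"
  unfolding factor_mat_def using assms by (intro cong_mat) (auto intro!: sum.cong)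

lemma factor_mat_eq_0:
  assumes "\<forall>r<R. p r \<in> carrier_vec n1 \<and> q r \<in> carrier_vec n2"
    and "\<forall>r<R. norm2 (p r) = 0 \<or> norm2 (q r) = 0"
  shows "factor_mat n1 n2 R p q = 0\<^sub>m n1 n2"
proof -
  have "factor_mat n1 n2 R p q = factor_mat n1 n2 R (\<lambda>_. 0\<^sub>v n1) (\<lambda>_. 0\<^sub>v n2)"
  proof (rule factor_mat_cong)
    fix r i j assume "r < R" "i < n1" "j < n2"
    then have "p r $ i * q r $ j = 0" using assms by (intro outer_entry_eq_0) auto
    then show "p r $ i * q r $ j = 0\<^sub>v n1 $ i * 0\<^sub>v n2 $ j" using \<open>i < n1\<close> \<open>j < n2\<close> by simp
  qed
  also have "\<dots> = 0\<^sub>m n1 n2"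
    unfolding factor_mat_def by (rule eq_matI) auto
  finally show ?thesis .
qed

lemma factor_mat_concat:
  "factor_mat n1 n2 (R + R') (\<lambda>r. if r < R then p r else p' (r - R))
     (\<lambda>r. if r < R then q r else q' (r - R))
   = factor_mat n1 n2 R p q + factor_mat n1 n2 R' p' q'"
  unfolding factor_mat_def by (intro eq_matI) (auto simp: sum_lessThan_add)

lemma factor_mat_uminus:
  assumes "\<forall>r<R. p r \<in> carrier_vec n1"
  shows "factor_mat n1 n2 R (\<lambda>r. - p r) q = - factor_mat n1 n2 R p q"
  using assms unfolding factor_mat_def by (intro eq_matI) (auto simp: sum_negf[symmetric] intro!: sum.cong)

lemma factor_mat_diff:
  assumes "\<forall>r<R'. p' r \<in> carrier_vec n1"
  shows "factor_mat n1 n2 R p q - factor_mat n1 n2 R' p' q'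
    = factor_mat n1 n2 (R + R') (\<lambda>r. if r < R then p r else - p' (r - R))
        (\<lambda>r. if r < R then q r else q' (r - R))"
proof -
  have "factor_mat n1 n2 R p q - factor_mat n1 n2 R' p' q'
      = factor_mat n1 n2 R p q + factor_mat n1 n2 R' (\<lambda>r. - p' r) q'"
    using assms by (simp add: factor_mat_uminus minus_add_uminus_mat[of _ n1 n2])
  then show ?thesis using factor_mat_concat[of n1 n2 R R' p "\<lambda>r. - p' r" q q'] by simp
qed

lemma factor_weight_sum_pos:
  assumes "\<forall>r<R. p r \<in> carrier_vec n1 \<and> q r \<in> carrier_vec n2"
    and "mrank (factor_mat n1 n2 R p q) \<noteq> 0" "0 < a"
  shows "0 < (\<Sum>r<R. (norm2 (p r) * norm2 (q r)) powr a)"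
proof (rule ccontr)
  assume "\<not> ?thesis"
  then have "\<forall>r<R. (norm2 (p r) * norm2 (q r)) powr a = 0"
    using sum_nonneg_eq_0_iff[of "{..<R}" "\<lambda>r. (norm2 (p r) * norm2 (q r)) powr a"]
    by (simp add: order_antisym sum_nonneg)
  then have "factor_mat n1 n2 R p q = 0\<^sub>m n1 n2"
    using assms(1) by (intro factor_mat_eq_0) auto
  then show False using assms(2) unfolding mrank_def by (simp add: vec_space.rank_0I)
qed

lemma rank_one_normalization:
  assumes "0 < n1" "0 < n2" "1 \<le> s"
    and p: "p \<in> carrier_vec n1" and q: "q \<in> carrier_vec n2"
    and q_sparse: "norm1 q \<le> sqrt s * norm2 q"
  obtains u v where "u \<in> K_set n1 (real n1)" "v \<in> K_set n2 s" "norm2 u = 1" "norm2 v = 1"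
    "\<And>i j. i < n1 \<Longrightarrow> j < n2 \<Longrightarrow> norm2 p * norm2 q * u $ i * v $ j = p $ i * q $ j"
proof (cases "norm2 p = 0 \<or> norm2 q = 0")
  case True
  then show ?thesis
    using that[of "unit_vec n1 0" "unit_vec n2 0"] unit_vec_in_K_set assms outer_entry_eq_0[OF True]
    by auto
next
  case False
  then have pos: "0 < norm2 p" "0 < norm2 q"
    using norm2_nonneg[of p] norm2_nonneg[of q] by linarith+
  define u where "u = (1 / norm2 p) \<cdot>\<^sub>v p"
  define v where "v = (1 / norm2 q) \<cdot>\<^sub>v q"
  have unit: "norm2 u = 1" "norm2 v = 1" and carrier: "u \<in> carrier_vec n1" "v \<in> carrier_vec n2"
    using pos p q unfolding u_def v_def by auto
  have "norm1 u \<le> sqrt (real n1)"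
    using norm1_le_sqrt_dim_norm2[of u] carrier unit by simp
  moreover have "norm1 v \<le> sqrt s"
    using q_sparse pos unfolding v_def by (simp add: divide_le_eq)
  ultimately have "u \<in> K_set n1 (real n1)" "v \<in> K_set n2 s"
    using carrier unit unfolding K_set_def by auto
  moreover have "norm2 p * norm2 q * u $ i * v $ j = p $ i * q $ j" if "i < n1" "j < n2" for i j
    using pos p q that unfolding u_def v_def by simp
  ultimately show ?thesis using that unit by blast
qed

lemma factor_mat_in_K_RG:
  assumes "0 < n1" "0 < n2" "1 \<le> s"
    and carrier: "\<forall>r<R. p r \<in> carrier_vec n1 \<and> q r \<in> carrier_vec n2"
    and sparse: "\<forall>r<R. norm1 (q r) \<le> sqrt s * norm2 (q r)"
    and \<Gamma>: "sqrt (\<Sum>r<R. (norm2 (p r) * norm2 (q r))\<^sup>2) \<le> \<Gamma>"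
  shows "factor_mat n1 n2 R p q \<in> K_RG n1 n2 R \<Gamma> (real n1) s"
proof -
  have "\<forall>r<R. \<exists>u v. u \<in> K_set n1 (real n1) \<and> v \<in> K_set n2 s \<and> norm2 u = 1 \<and> norm2 v = 1 \<and>
      (\<forall>i<n1. \<forall>j<n2. norm2 (p r) * norm2 (q r) * u $ i * v $ j = p r $ i * q r $ j)"
    using rank_one_normalization[OF assms(1-3)] carrier sparse by metis
  then obtain u v where uv: "\<forall>r<R. u r \<in> K_set n1 (real n1) \<and> v r \<in> K_set n2 s \<and>
      norm2 (u r) = 1 \<and> norm2 (v r) = 1 \<and>
      (\<forall>i<n1. \<forall>j<n2. norm2 (p r) * norm2 (q r) * u r $ i * v r $ j = p r $ i * q r $ j)"
    by metis
  define \<sigma> where "\<sigma> r = norm2 (p r) * norm2 (q r)" for r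
  have "factor_mat n1 n2 R p q = mat n1 n2 (\<lambda>(i,j). \<Sum>r<R. \<sigma> r * u r $ i * v r $ j)"
    unfolding factor_mat_def \<sigma>_def using uv by (intro cong_mat) (auto intro!: sum.cong)
  moreover have "sqrt (\<Sum>r<R. (\<sigma> r)\<^sup>2) \<le> \<Gamma>"
    using \<Gamma> unfolding \<sigma>_def .
  ultimately show ?thesis
    unfolding K_RG_def using uv by blast
qed

lemma sparse_RIP_factor_mat:
  assumes "sparse_RIP n1 n2 A R (real n1) s \<Gamma> \<delta>" "0 < n1" "0 < n2" "1 \<le> s"
    and "\<forall>r<R. p r \<in> carrier_vec n1 \<and> q r \<in> carrier_vec n2"
    and "\<forall>r<R. norm1 (q r) \<le> sqrt s * norm2 (q r)"
    and "sqrt (\<Sum>r<R. (norm2 (p r) * norm2 (q r))\<^sup>2) \<le> \<Gamma>"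
  shows "\<bar>(norm2 (A (factor_mat n1 n2 R p q)))\<^sup>2 - (frob (factor_mat n1 n2 R p q))\<^sup>2\<bar> \<le> \<delta>"
  using assms factor_mat_in_K_RG[of n1 n2 s R p q \<Gamma>] unfolding sparse_RIP_def by blast

text \<open>This is why the RIP is needed at rank $2R$: the difference of two factorizations is the
  factorization with the concatenated factors.\<close>

lemma sparse_RIP_factor_mat_diff:
  assumes RIP: "sparse_RIP n1 n2 A (R + R') (real n1) s (\<Gamma>\<^sub>1 + \<Gamma>\<^sub>2) \<delta>"
    and "0 < n1" "0 < n2" "1 \<le> s"
    and carrier: "\<forall>r<R. p r \<in> carrier_vec n1 \<and> q r \<in> carrier_vec n2"
      "\<forall>r<R'. p' r \<in> carrier_vec n1 \<and> q' r \<in> carrier_vec n2"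
    and sparse: "\<forall>r<R. norm1 (q r) \<le> sqrt s * norm2 (q r)"
      "\<forall>r<R'. norm1 (q' r) \<le> sqrt s * norm2 (q' r)"
    and \<Gamma>: "sqrt (\<Sum>r<R. (norm2 (p r) * norm2 (q r))\<^sup>2) \<le> \<Gamma>\<^sub>1"
      "sqrt (\<Sum>r<R'. (norm2 (p' r) * norm2 (q' r))\<^sup>2) \<le> \<Gamma>\<^sub>2"
  defines "Z \<equiv> factor_mat n1 n2 R p q - factor_mat n1 n2 R' p' q'"
  shows "\<bar>(norm2 (A Z))\<^sup>2 - (frob Z)\<^sup>2\<bar> \<le> \<delta>"
proof -
  define P where "P r = (if r < R then p r else - p' (r - R))" for r
  define Q where "Q r = (if r < R then q r else q' (r - R))" for r
  have "Z = factor_mat n1 n2 (R + R') P Q"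
    unfolding Z_def P_def Q_def using carrier(2) by (intro factor_mat_diff) auto
  moreover have "sqrt (\<Sum>r<R + R'. (norm2 (P r) * norm2 (Q r))\<^sup>2) \<le> \<Gamma>\<^sub>1 + \<Gamma>\<^sub>2"
  proof -
    have "sqrt (\<Sum>r<R + R'. (norm2 (P r) * norm2 (Q r))\<^sup>2)
        \<le> sqrt (\<Sum>r<R. (norm2 (p r) * norm2 (q r))\<^sup>2) + sqrt (\<Sum>r<R'. (norm2 (p' r) * norm2 (q' r))\<^sup>2)"
      unfolding sum_lessThan_add P_def Q_def by (simp add: sqrt_add_le_add_sqrt sum_nonneg)
    then show ?thesis using \<Gamma> by linarith
  qed
  moreover have "\<forall>r<R + R'. P r \<in> carrier_vec n1 \<and> Q r \<in> carrier_vec n2"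
    "\<forall>r<R + R'. norm1 (Q r) \<le> sqrt s * norm2 (Q r)"
    using carrier sparse unfolding P_def Q_def by auto
  ultimately show ?thesis using sparse_RIP_factor_mat[OF RIP assms(2-4)] by simp
qed

lemma sparse_RIP_factor_mat_padded:
  assumes "sparse_RIP n1 n2 A (R + R') (real n1) s (\<Gamma>\<^sub>1 + \<Gamma>\<^sub>2) \<delta>"
    and "0 < n1" "0 < n2" "1 \<le> s" "0 \<le> \<Gamma>\<^sub>2"
    and "\<forall>r<R. p r \<in> carrier_vec n1 \<and> q r \<in> carrier_vec n2"
    and "\<forall>r<R. norm1 (q r) \<le> sqrt s * norm2 (q r)"
    and "sqrt (\<Sum>r<R. (norm2 (p r) * norm2 (q r))\<^sup>2) \<le> \<Gamma>\<^sub>1"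
  shows "\<bar>(norm2 (A (factor_mat n1 n2 R p q)))\<^sup>2 - (frob (factor_mat n1 n2 R p q))\<^sup>2\<bar> \<le> \<delta>"
proof -
  have "factor_mat n1 n2 R p q - factor_mat n1 n2 R' (\<lambda>_. 0\<^sub>v n1) (\<lambda>_. 0\<^sub>v n2) = factor_mat n1 n2 R p q"
    by (intro eq_matI) (auto simp: factor_mat_def)
  moreover have "\<bar>(norm2 (A (factor_mat n1 n2 R p q - factor_mat n1 n2 R' (\<lambda>_. 0\<^sub>v n1) (\<lambda>_. 0\<^sub>v n2))))\<^sup>2
      - (frob (factor_mat n1 n2 R p q - factor_mat n1 n2 R' (\<lambda>_. 0\<^sub>v n1) (\<lambda>_. 0\<^sub>v n2)))\<^sup>2\<bar> \<le> \<delta>"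
    by (rule sparse_RIP_factor_mat_diff[OF assms(1-4,6) _ assms(7) _ assms(8)]) (use assms(5) in auto)
  ultimately show ?thesis by simp
qed

section \<open>The functional and its minimizers\<close>

text \<open>The pair $(t p, q / t)$ with $t^3 = \|q\|_1 / \|p\|_2^2$ balances the two penalty terms.\<close>

lemma balanced_rescaling:
  assumes p: "p \<in> carrier_vec n1" and q: "q \<in> carrier_vec n2"
    and "0 < s" and q_sparse: "norm1 q \<le> sqrt s * norm2 q"
  obtains p' q' where "p' \<in> carrier_vec n1" "q' \<in> carrier_vec n2"
    "\<And>i j. i < n1 \<Longrightarrow> j < n2 \<Longrightarrow> p' $ i * q' $ j = p $ i * q $ j"
    "(norm2 p')\<^sup>2 + norm1 q' \<le> 2 * s powr (1/3) * (norm2 p * norm2 q) powr (2/3)"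
proof (cases "norm2 p = 0 \<or> norm2 q = 0")
  case True
  then show ?thesis
    using that[of "0\<^sub>v n1" "0\<^sub>v n2"] outer_entry_eq_0[OF True] p q by auto
next
  case False
  then have pos: "0 < norm2 p" "0 < norm2 q"
    using norm2_nonneg[of p] norm2_nonneg[of q] by linarith+
  then have "0 < norm1 q" using norm2_le_norm1[of q] by linarith
  define t where "t = (norm2 p * norm1 q) powr (1/3) / norm2 p"
  note balance = cube_root_balance[OF pos(1) \<open>0 < norm1 q\<close> \<open>0 < s\<close> q_sparse, folded t_def]
  have "(norm2 (t \<cdot>\<^sub>v p))\<^sup>2 + norm1 ((1 / t) \<cdot>\<^sub>v q) = t\<^sup>2 * (norm2 p)\<^sup>2 + norm1 q / t"
    using balance(1) by (simp add: power_mult_distrib)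
  then show ?thesis
    using that[of "t \<cdot>\<^sub>v p" "(1 / t) \<cdot>\<^sub>v q"] balance p q by auto
qed

lemma lin_meas_zero:
  assumes "lin_meas n1 n2 m A"
  shows "A (0\<^sub>m n1 n2) = 0\<^sub>v m"
proof -
  have A0: "A (0\<^sub>m n1 n2) \<in> carrier_vec m"
    using assms unfolding lin_meas_def by (meson zero_carrier_mat)
  have "A (0\<^sub>m n1 n2) = A (0 \<cdot>\<^sub>m 0\<^sub>m n1 n2)" by simp
  also have "\<dots> = 0 \<cdot>\<^sub>v A (0\<^sub>m n1 n2)" using assms unfolding lin_meas_def by (meson zero_carrier_mat)
  also have "\<dots> = 0\<^sub>v m" using A0 by (intro eq_vecI) auto
  finally show ?thesis .
qed

lemma lin_meas_diff:
  assumes "lin_meas n1 n2 m A" "Z \<in> carrier_mat n1 n2" "W \<in> carrier_mat n1 n2"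
  shows "A (Z - W) = A Z - A W"
proof -
  have car: "A (Z - W) \<in> carrier_vec m" "A W \<in> carrier_vec m"
    using assms minus_carrier_mat unfolding lin_meas_def by blast+
  have "Z = (Z - W) + W" using assms(2,3) by (intro eq_matI) auto
  then have "A Z = A (Z - W) + A W" using assms unfolding lin_meas_def by (metis minus_carrier_mat)
  then show ?thesis using car by (intro eq_vecI) auto
qed

lemma residual_le_J_fun:
  assumes "0 \<le> \<alpha>" "0 \<le> \<beta>"
  shows "(norm2 (y - A (factor_mat n1 n2 R u v)))\<^sup>2 \<le> J_fun n1 n2 A y R \<alpha> \<beta> u v"
  using assms unfolding J_fun_def by (simp add: sum_nonneg)

lemma norm1_le_of_J_fun_bound:
  assumes "0 < \<alpha>" "0 < \<gamma>" "r < R"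
    and J: "J_fun n1 n2 A y R \<alpha> \<alpha> u v \<le> B" and v: "B / \<gamma> \<le> norm2 (v r)"
  shows "norm1 (v r) \<le> \<gamma> / \<alpha> * norm2 (v r)"
proof -
  have "\<alpha> * norm1 (v r) \<le> \<alpha> * (\<Sum>r<R. norm1 (v r))"
    using assms by (intro mult_left_mono member_le_sum) auto
  moreover have "0 \<le> \<alpha> * (\<Sum>r<R. (norm2 (u r))\<^sup>2)" using assms(1) by (simp add: sum_nonneg)
  ultimately have "\<alpha> * norm1 (v r) \<le> J_fun n1 n2 A y R \<alpha> \<alpha> u v"
    unfolding J_fun_def by (smt (verit) zero_le_power2)
  also have "\<dots> \<le> \<gamma> * norm2 (v r)" using J v \<open>0 < \<gamma>\<close> by (simp add: pos_divide_le_eq mult.commute)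
  finally show ?thesis using assms(1) by (simp add: field_simps)
qed

lemma J_fun_zero_factors:
  assumes "lin_meas n1 n2 m A" "y \<in> carrier_vec m"
  shows "J_fun n1 n2 A y R \<alpha> \<beta> (\<lambda>_. 0\<^sub>v n1) (\<lambda>_. 0\<^sub>v n2) = (norm2 y)\<^sup>2"
proof -
  have "factor_mat n1 n2 R (\<lambda>_. 0\<^sub>v n1) (\<lambda>_. 0\<^sub>v n2) = 0\<^sub>m n1 n2"
    by (rule factor_mat_eq_0) auto
  then show ?thesis
    using assms lin_meas_zero[OF assms(1)] unfolding J_fun_def by simp
qed

lemma J_fun_minimizer_le_norm_sq:
  assumes "lin_meas n1 n2 m A" "y \<in> carrier_vec m"
    and "\<forall>u' v'. (\<forall>r<R. u' r \<in> carrier_vec n1 \<and> v' r \<in> carrier_vec n2) \<longrightarrow>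
      J_fun n1 n2 A y R \<alpha> \<beta> u v \<le> J_fun n1 n2 A y R \<alpha> \<beta> u' v'"
  shows "J_fun n1 n2 A y R \<alpha> \<beta> u v \<le> (norm2 y)\<^sup>2"
  using assms(3)[rule_format, of "\<lambda>_. 0\<^sub>v n1" "\<lambda>_. 0\<^sub>v n2"] J_fun_zero_factors[OF assms(1,2)] by simp

lemma J_fun_minimizer_le_signal_noise:
  assumes A: "lin_meas n1 n2 m A" and Z: "Z \<in> carrier_mat n1 n2" and \<eta>: "\<eta> \<in> carrier_vec m"
    and RIP: "\<bar>(norm2 (A Z))\<^sup>2 - (frob Z)\<^sup>2\<bar> \<le> \<delta>"
    and minim: "\<forall>u' v'. (\<forall>r<R. u' r \<in> carrier_vec n1 \<and> v' r \<in> carrier_vec n2) \<longrightarrow>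
      J_fun n1 n2 A (A Z + \<eta>) R \<alpha> \<beta> u v \<le> J_fun n1 n2 A (A Z + \<eta>) R \<alpha> \<beta> u' v'"
  shows "J_fun n1 n2 A (A Z + \<eta>) R \<alpha> \<beta> u v \<le> (frob Z + norm2 \<eta> + sqrt \<delta>)\<^sup>2"
proof -
  have AZ: "A Z \<in> carrier_vec m" using A Z unfolding lin_meas_def by blast
  have "norm2 (A Z) \<le> frob Z + sqrt \<delta>"
    using RIP by (rule le_add_sqrt_if_abs_sq_diff_le) (simp add: frob_def sum_nonneg)
  then have "norm2 (A Z + \<eta>) \<le> frob Z + norm2 \<eta> + sqrt \<delta>"
    using norm2_add_le[OF AZ \<eta>] by linarith
  then have "(norm2 (A Z + \<eta>))\<^sup>2 \<le> (frob Z + norm2 \<eta> + sqrt \<delta>)\<^sup>2"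
    by (intro power_mono) simp_all
  moreover have "J_fun n1 n2 A (A Z + \<eta>) R \<alpha> \<beta> u v \<le> (norm2 (A Z + \<eta>))\<^sup>2"
    using AZ \<eta> by (intro J_fun_minimizer_le_norm_sq[OF A _ minim]) simp
  ultimately show ?thesis by linarith
qed

lemma J_fun_balanced_competitor:
  assumes "\<forall>r<R. p r \<in> carrier_vec n1 \<and> q r \<in> carrier_vec n2"
    and "0 < s" "\<forall>r<R. norm1 (q r) \<le> sqrt s * norm2 (q r)" and "0 \<le> \<alpha>"
  obtains p' q' where "\<forall>r<R. p' r \<in> carrier_vec n1 \<and> q' r \<in> carrier_vec n2"
    "J_fun n1 n2 A y R \<alpha> \<alpha> p' q' \<le> (norm2 (y - A (factor_mat n1 n2 R p q)))\<^sup>2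
       + 2 * \<alpha> * s powr (1/3) * (\<Sum>r<R. (norm2 (p r) * norm2 (q r)) powr (2/3))"
proof -
  have "\<forall>r<R. \<exists>p'' q''. p'' \<in> carrier_vec n1 \<and> q'' \<in> carrier_vec n2 \<and>
      (\<forall>i<n1. \<forall>j<n2. p'' $ i * q'' $ j = p r $ i * q r $ j) \<and>
      (norm2 p'')\<^sup>2 + norm1 q'' \<le> 2 * s powr (1/3) * (norm2 (p r) * norm2 (q r)) powr (2/3)"
    using balanced_rescaling[OF _ _ \<open>0 < s\<close>] assms(1,3) by metis
  then obtain p' q' where pq': "\<forall>r<R. p' r \<in> carrier_vec n1 \<and> q' r \<in> carrier_vec n2 \<and>
      (\<forall>i<n1. \<forall>j<n2. p' r $ i * q' r $ j = p r $ i * q r $ j) \<and>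
      (norm2 (p' r))\<^sup>2 + norm1 (q' r) \<le> 2 * s powr (1/3) * (norm2 (p r) * norm2 (q r)) powr (2/3)"
    by metis
  have "factor_mat n1 n2 R p' q' = factor_mat n1 n2 R p q"
    using pq' by (intro factor_mat_cong) auto
  then have "J_fun n1 n2 A y R \<alpha> \<alpha> p' q' = (norm2 (y - A (factor_mat n1 n2 R p q)))\<^sup>2
      + \<alpha> * (\<Sum>r<R. (norm2 (p' r))\<^sup>2 + norm1 (q' r))"
    unfolding J_fun_def by (simp add: sum.distrib distrib_left)
  also have "\<dots> \<le> (norm2 (y - A (factor_mat n1 n2 R p q)))\<^sup>2
      + \<alpha> * (\<Sum>r<R. 2 * s powr (1/3) * (norm2 (p r) * norm2 (q r)) powr (2/3))"
    using pq' assms(4) by (intro add_left_mono mult_left_mono sum_mono) auto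
  finally show ?thesis
    using that[of p' q'] pq' by (simp add: sum_distrib_left[symmetric] algebra_simps)
qed

lemma J_fun_minimizer_le_balanced:
  assumes A: "lin_meas n1 n2 m A" and \<eta>: "\<eta> \<in> carrier_vec m"
    and carrier: "\<forall>r<R. p r \<in> carrier_vec n1 \<and> q r \<in> carrier_vec n2"
    and "0 < s" and sparse: "\<forall>r<R. norm1 (q r) \<le> sqrt s * norm2 (q r)" and "0 \<le> \<alpha>"
    and minim: "\<forall>u' v'. (\<forall>r<R. u' r \<in> carrier_vec n1 \<and> v' r \<in> carrier_vec n2) \<longrightarrow>
      J_fun n1 n2 A y R \<alpha> \<alpha> u v \<le> J_fun n1 n2 A y R \<alpha> \<alpha> u' v'"
    and y: "y = A (factor_mat n1 n2 R p q) + \<eta>"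
  shows "J_fun n1 n2 A y R \<alpha> \<alpha> u v
    \<le> (norm2 \<eta>)\<^sup>2 + 2 * \<alpha> * s powr (1/3) * (\<Sum>r<R. (norm2 (p r) * norm2 (q r)) powr (2/3))"
proof -
  obtain p' q' where "\<forall>r<R. p' r \<in> carrier_vec n1 \<and> q' r \<in> carrier_vec n2"
    and "J_fun n1 n2 A y R \<alpha> \<alpha> p' q' \<le> (norm2 (y - A (factor_mat n1 n2 R p q)))\<^sup>2
       + 2 * \<alpha> * s powr (1/3) * (\<Sum>r<R. (norm2 (p r) * norm2 (q r)) powr (2/3))"
    by (rule J_fun_balanced_competitor[OF carrier \<open>0 < s\<close> sparse \<open>0 \<le> \<alpha>\<close>])
  moreover have "A (factor_mat n1 n2 R p q) \<in> carrier_vec m"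
    using A unfolding lin_meas_def by simp
  then have "y - A (factor_mat n1 n2 R p q) = \<eta>"
    using \<eta> unfolding y by (intro eq_vecI) auto
  ultimately show ?thesis using minim by fastforce
qed

lemma recovery_error_le:
  assumes A: "lin_meas n1 n2 m A" and Z: "Z \<in> carrier_mat n1 n2" and W: "W \<in> carrier_mat n1 n2"
    and \<eta>: "\<eta> \<in> carrier_vec m" and "0 \<le> K"
    and RIP: "\<bar>(norm2 (A (Z - W)))\<^sup>2 - (frob (Z - W))\<^sup>2\<bar> \<le> \<delta>"
    and residual: "(norm2 (A Z + \<eta> - A W))\<^sup>2 \<le> (1 + 2 * K) * (norm2 \<eta>)\<^sup>2"
  shows "frob (Z - W) \<le> (2 * sqrt K + 2) * norm2 \<eta> + sqrt \<delta>"
proof -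
  have AZ: "A Z \<in> carrier_vec m" and AW: "A W \<in> carrier_vec m"
    using A Z W unfolding lin_meas_def by blast+
  have "frob (Z - W) \<le> norm2 (A (Z - W)) + sqrt \<delta>"
    using RIP by (intro le_add_sqrt_if_abs_sq_diff_le) (simp_all add: abs_minus_commute)
  moreover have "A (Z - W) = (A Z + \<eta> - A W) - \<eta>"
    using lin_meas_diff[OF A Z W] AZ AW \<eta> by (intro eq_vecI) auto
  then have "norm2 (A (Z - W)) \<le> norm2 (A Z + \<eta> - A W) + norm2 \<eta>"
    using AZ AW \<eta> by (simp add: norm2_diff_le[of _ m])
  moreover have "norm2 (A Z + \<eta> - A W) \<le> sqrt (1 + 2 * K) * norm2 \<eta>"
    using real_le_rsqrt[OF residual] by (simp add: real_sqrt_mult)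
  moreover have "sqrt (1 + 2 * K) * norm2 \<eta> \<le> (1 + 2 * sqrt K) * norm2 \<eta>"
    using \<open>0 \<le> K\<close> by (intro mult_right_mono sqrt_one_plus_twice_le) simp_all
  ultimately show ?thesis by (simp add: algebra_simps)
qed

theorem mainTheorem7:
  fixes n1 n2 m R :: nat and \<Gamma> s \<gamma> c cU \<delta> \<alpha> \<beta> :: real
    and A :: "real mat \<Rightarrow> real vec" and \<eta> y :: "real vec"
    and uh vh u v :: "nat \<Rightarrow> real vec"
  assumes A: "lin_meas n1 n2 m A"
    and R: "R \<ge> 1" and Gam: "\<Gamma> \<ge> 1" and s: "1 \<le> s" "s \<le> real n2"
    and gam: "\<gamma> > 0" and c: "c \<ge> 1"
    and uh_dim: "\<forall>r<R. uh r \<in> carrier_vec n1" and vh_dim: "\<forall>r<R. vh r \<in> carrier_vec n2"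
    and rank: "mrank (factor_mat n1 n2 R uh vh) = R"
    and vh_sparse: "\<forall>r<R. norm1 (vh r) \<le> sqrt s * norm2 (vh r)"
    and Gam_bd: "(\<Sum>r<R. (norm2 (uh r))^2 * (norm2 (vh r))^2) \<le> \<Gamma>^2"
    and cU: "cU > 0"
    and cU_bd: "(\<Sum>r<R. (norm2 (uh r) * norm2 (vh r)) powr (2/3))
                  \<le> cU * real R powr (2/3) * (schatten (2/3) (factor_mat n1 n2 R uh vh)) powr (2/3)"
    and eta: "\<eta> \<in> carrier_vec m" "\<eta> \<noteq> 0\<^sub>v m"
    and y: "y = A (factor_mat n1 n2 R uh vh) + \<eta>"
    and alpha: "\<alpha> = (norm2 \<eta>)^2 / (schatten (2/3) (factor_mat n1 n2 R uh vh)) powr (2/3)"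
    and beta: "\<beta> = \<alpha>" and alpha_lt: "\<alpha> < 1"
    and delta: "0 < \<delta>" "\<delta> < 1"
    and RIP: "sparse_RIP n1 n2 A (2 * R) (real n1)
               (max s (\<gamma>^2 * ((schatten (2/3) (factor_mat n1 n2 R uh vh)) powr (2/3) / (norm2 \<eta>)^2)^2))
               ((c + 1) * \<Gamma>) \<delta>"
    and u_dim: "\<forall>r<R. u r \<in> carrier_vec n1" and v_dim: "\<forall>r<R. v r \<in> carrier_vec n2"
    and minim: "\<forall>u' v'. (\<forall>r<R. u' r \<in> carrier_vec n1 \<and> v' r \<in> carrier_vec n2) \<longrightarrow>
                  J_fun n1 n2 A y R \<alpha> \<beta> u v \<le> J_fun n1 n2 A y R \<alpha> \<beta> u' v'"
    and sigma_bd: "sqrt (\<Sum>r<R. (norm2 (u r) * norm2 (v r))^2) \<le> c * \<Gamma>"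
    and v_lb: "\<forall>r<R. norm2 (v r) \<ge> (frob (factor_mat n1 n2 R uh vh) + norm2 \<eta> + sqrt \<delta>)^2 / \<gamma>"
  shows "frob (factor_mat n1 n2 R uh vh - factor_mat n1 n2 R u v)
           \<le> (2 * sqrt (cU * real R powr (2/3) * s powr (1/3)) + 2) * norm2 \<eta> + sqrt \<delta>"
proof (cases "n1 = 0")
  case True
  have "0 \<le> (2 * sqrt (cU * real R powr (2/3) * s powr (1/3)) + 2) * norm2 \<eta> + sqrt \<delta>"
    using cU delta by simp
  then show ?thesis using True by (simp add: frob_def factor_mat_def)
next
  case False
  then have n: "0 < n1" "0 < n2" using s by auto
  define Xh X S e K where "Xh = factor_mat n1 n2 R uh vh" and "X = factor_mat n1 n2 R u v"
    and "S = schatten (2/3) Xh powr (2/3)" and "e = norm2 \<eta>"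
    and "K = cU * real R powr (2/3) * s powr (1/3)"
  define s2 where "s2 = max s (\<gamma>\<^sup>2 * (S / e\<^sup>2)\<^sup>2)"
  have carrier: "\<forall>r<R. uh r \<in> carrier_vec n1 \<and> vh r \<in> carrier_vec n2"
    "\<forall>r<R. u r \<in> carrier_vec n1 \<and> v r \<in> carrier_vec n2"
    using uh_dim vh_dim u_dim v_dim by auto
  have "e > 0" unfolding e_def using eta by (rule norm2_pos_if_nonzero)
  have "0 < (\<Sum>r<R. (norm2 (uh r) * norm2 (vh r)) powr (2/3))"
    using factor_weight_sum_pos[OF carrier(1)] rank R by simp
  then have "0 < cU * real R powr (2/3) * S"
    using cU_bd unfolding S_def Xh_def by linarith
  moreover have "0 \<le> cU * real R powr (2/3)" using cU by simp
  ultimately have "S > 0" by (auto simp: zero_less_mult_iff)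
  have \<alpha>: "\<alpha> = e\<^sup>2 / S" "0 < \<alpha>" "\<beta> = \<alpha>"
    using \<open>e > 0\<close> \<open>S > 0\<close> unfolding alpha beta e_def S_def Xh_def by auto
  have "s \<le> s2" "1 \<le> s2" "\<gamma> * S / e\<^sup>2 \<le> sqrt s2"
    using real_sqrt_le_mono[of "\<gamma>\<^sup>2 * (S / e\<^sup>2)\<^sup>2" s2] gam \<open>S > 0\<close> \<open>e > 0\<close> s
    unfolding s2_def by (auto simp: real_sqrt_mult)
  have RIP': "sparse_RIP n1 n2 A (R + R) (real n1) s2 (\<Gamma> + c * \<Gamma>) \<delta>"
    using RIP unfolding s2_def S_def e_def Xh_def by (simp add: mult_2 distrib_right add.commute)
  have vh_sparse2: "\<forall>r<R. norm1 (vh r) \<le> sqrt s2 * norm2 (vh r)"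
    using vh_sparse \<open>s \<le> s2\<close> by (meson mult_right_mono norm2_nonneg order_trans real_sqrt_le_mono)
  have uh_vh_\<Gamma>: "sqrt (\<Sum>r<R. (norm2 (uh r) * norm2 (vh r))\<^sup>2) \<le> \<Gamma>"
    using Gam_bd Gam by (intro real_le_lsqrt) (auto simp: power_mult_distrib sum_nonneg)
  have "\<bar>(norm2 (A Xh))\<^sup>2 - (frob Xh)\<^sup>2\<bar> \<le> \<delta>"
    unfolding Xh_def using c Gam
    by (intro sparse_RIP_factor_mat_padded[OF RIP' n \<open>1 \<le> s2\<close> _ carrier(1) vh_sparse2 uh_vh_\<Gamma>]) simp
  then have J_le_signal_noise: "J_fun n1 n2 A y R \<alpha> \<beta> u v \<le> (frob Xh + e + sqrt \<delta>)\<^sup>2"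
    using minim unfolding y Xh_def e_def
    by (intro J_fun_minimizer_le_signal_noise[OF A _ eta(1)]) simp_all
  have "\<gamma> / \<alpha> = \<gamma> * S / e\<^sup>2" unfolding \<alpha>(1) by simp
  then have v_sparse2: "\<forall>r<R. norm1 (v r) \<le> sqrt s2 * norm2 (v r)"
    using norm1_le_of_J_fun_bound[OF \<alpha>(2) gam _ J_le_signal_noise[unfolded \<alpha>(3)]] v_lb \<open>\<gamma> * S / e\<^sup>2 \<le> sqrt s2\<close>
    unfolding Xh_def e_def by (metis mult_right_mono norm2_nonneg order_trans)
  have "\<bar>(norm2 (A (Xh - X)))\<^sup>2 - (frob (Xh - X))\<^sup>2\<bar> \<le> \<delta>"
    unfolding Xh_def X_def
    by (rule sparse_RIP_factor_mat_diff[OF RIP' n \<open>1 \<le> s2\<close> carrier vh_sparse2 v_sparse2 uh_vh_\<Gamma>])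
      (rule sigma_bd)
  moreover have "(norm2 (A Xh + \<eta> - A X))\<^sup>2 \<le> (1 + 2 * K) * e\<^sup>2"
  proof -
    have "(norm2 (y - A X))\<^sup>2 \<le> J_fun n1 n2 A y R \<alpha> \<beta> u v"
      unfolding X_def using \<alpha>(2,3) by (intro residual_le_J_fun) auto
    also have "\<dots> \<le> e\<^sup>2 + 2 * \<alpha> * s powr (1/3) * (\<Sum>r<R. (norm2 (uh r) * norm2 (vh r)) powr (2/3))"
      using s \<alpha>(2) minim unfolding e_def \<alpha>(3)
      by (intro J_fun_minimizer_le_balanced[OF A eta(1) carrier(1) _ vh_sparse _ _ y]) auto
    also have "\<dots> \<le> e\<^sup>2 + 2 * \<alpha> * s powr (1/3) * (cU * real R powr (2/3) * S)"
      using cU_bd \<alpha>(2) unfolding S_def Xh_def by (intro add_left_mono mult_left_mono) simp_all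
    also have "\<dots> = (1 + 2 * K) * e\<^sup>2"
      unfolding K_def \<alpha>(1) using \<open>S > 0\<close> by (simp add: field_simps)
    finally show ?thesis unfolding y Xh_def .
  qed
  ultimately show ?thesis
    using recovery_error_le[OF A _ _ eta(1)] cU unfolding Xh_def X_def K_def e_def by simp
qed

end
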